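(* Let $G$ be a finite simple graph without isolated vertices and let $d\ge 2$ be an integer. Then Dom has a winning strategy in the $(d:1)$-game played on $G$ (whichever player starts).
   Context: For a vertex $v$, $N[v]$ is its closed neighborhood. Colors are $p$ (purple) and $b$ (blue); $V_p,V_b$ denote the current sets of vertices of each color. A single coloring step (by either player, who may use either color) consists of choosing a vertex $v$ and a color $c$ such that (i) $v$ is uncolored and (ii) some $u\in N[v]$ satisfies $N[u]\cap V_c=\emptyset$ (evaluated just before this step); then $v$ gets color $c$. In the $(d:s)$-game, Dom and Sepy take turns; in each of his turns Dom sequentially performs exactly $d$ such coloring steps (or fewer only when fewer legal steps remain), and in each of his turns Sepy performs at most $s$ such steps (he may also pass). The game terminates as soon as either (s* ) some vertex $v$ has $N[v]\subseteq V_p$ or $N[v]\subseteq V_b$ — Sepy wins; or (d* ) both $V_p$ and $V_b$ are dominating sets of $G$ — Dom wins. *)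

theory Defs
  imports Main
begin

datatype color = Purple | Blue
datatype player = Dom | Sepy

type_synonym 'a coloring = "'a \<Rightarrow> color option"

definition cnbhd :: "('a \<Rightarrow> 'a \<Rightarrow> bool) \<Rightarrow> 'a set \<Rightarrow> 'a \<Rightarrow> 'a set" where
  "cnbhd E V v = {u \<in> V. u = v \<or> E v u}"

definition colored :: "'a set \<Rightarrow> 'a coloring \<Rightarrow> color \<Rightarrow> 'a set" where
  "colored V col c = {v \<in> V. col v = Some c}"

definition legal_step :: "('a \<Rightarrow> 'a \<Rightarrow> bool) \<Rightarrow> 'a set \<Rightarrow> 'a coloring \<Rightarrow> 'a \<Rightarrow> color \<Rightarrow> bool" where
  "legal_step E V col v c \<longleftrightarrow> v \<in> V \<and> col v = None \<and>
     (\<exists>u \<in> cnbhd E V v. cnbhd E V u \<inter> colored V col c = {})"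

definition dominating :: "('a \<Rightarrow> 'a \<Rightarrow> bool) \<Rightarrow> 'a set \<Rightarrow> 'a set \<Rightarrow> bool" where
  "dominating E V D \<longleftrightarrow> D \<subseteq> V \<and> (\<forall>v \<in> V. cnbhd E V v \<inter> D \<noteq> {})"

definition sepy_wins_now :: "('a \<Rightarrow> 'a \<Rightarrow> bool) \<Rightarrow> 'a set \<Rightarrow> 'a coloring \<Rightarrow> bool" where
  "sepy_wins_now E V col \<longleftrightarrow>
     (\<exists>v \<in> V. cnbhd E V v \<subseteq> colored V col Purple \<or> cnbhd E V v \<subseteq> colored V col Blue)"

definition dom_wins_now :: "('a \<Rightarrow> 'a \<Rightarrow> bool) \<Rightarrow> 'a set \<Rightarrow> 'a coloring \<Rightarrow> bool" where
  "dom_wins_now E V col \<longleftrightarrow>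
     dominating E V (colored V col Purple) \<and> dominating E V (colored V col Blue)"

(* Positions of the (d:s)-game: (coloring, player to move, number of steps
   still available to that player in the current turn).
   dom_can_win E V d s col p j  holds iff Dom has a winning strategy from this position.
   The game ends as soon as s-star or d-star holds (checked after every single step). *)
inductive dom_can_win ::
  "('a \<Rightarrow> 'a \<Rightarrow> bool) \<Rightarrow> 'a set \<Rightarrow> nat \<Rightarrow> nat \<Rightarrow> 'a coloring \<Rightarrow> player \<Rightarrow> nat \<Rightarrow> bool"
  for E V d s where
  terminal_win:
    "\<lbrakk> \<not> sepy_wins_now E V col; dom_wins_now E V col \<rbrakk>
     \<Longrightarrow> dom_can_win E V d s col p j"
| dom_step:
    "\<lbrakk> \<not> sepy_wins_now E V col; \<not> dom_wins_now E V col; j > 0;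
       legal_step E V col v c;
       dom_can_win E V d s (col(v := Some c)) (if j = 1 then Sepy else Dom) (if j = 1 then s else j - 1) \<rbrakk>
     \<Longrightarrow> dom_can_win E V d s col Dom j"
| dom_end_turn:
    "\<lbrakk> \<not> sepy_wins_now E V col; \<not> dom_wins_now E V col;
       j = 0 \<or> \<not> (\<exists>v c. legal_step E V col v c);
       dom_can_win E V d s col Sepy s \<rbrakk>
     \<Longrightarrow> dom_can_win E V d s col Dom j"
| sepy_turn:
    "\<lbrakk> \<not> sepy_wins_now E V col; \<not> dom_wins_now E V col;
       dom_can_win E V d s col Dom d;
       \<forall>v c. j > 0 \<and> legal_step E V col v c \<longrightarrow>
          dom_can_win E V d s (col(v := Some c)) Sepy (j - 1) \<rbrakk>
     \<Longrightarrow> dom_can_win E V d s col Sepy j"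

end

theory Submission
  imports Defs
begin

text \<open>
  Call a coloured vertex \<^emph>\<open>threatened\<close> if its closed neighbourhood misses the other colour.
  A single coloring step can only make some \<open>N[u]\<close> monochromatic if \<open>u\<close> is threatened and the
  step colours the last uncoloured neighbour of \<open>u\<close> with the colour of \<open>u\<close>.  Colouring an
  uncoloured neighbour of a threatened vertex with the opposite colour defuses it (and the
  neighbour).  Sepy's single step creates at most one new threatened vertex, so at the start
  of each Dom turn there are at most two of them, and with \<open>d \<ge> 2\<close> Dom can spend steps defusing them,
  choosing the neighbour so as not to complete the other threatened vertex.  With his last
  step Dom makes sure that the only remaining threatened vertex, if any, cannot be completed
  by Sepy.  Since every step colours a vertex, the game ends, and the only way left for it to
  end is with both colour classes dominating.
\<close>

fun other_color :: "color \<Rightarrow> color" where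
  "other_color Purple = Blue"
| "other_color Blue = Purple"

lemma other_color_neq [simp]: "other_color c \<noteq> c" "c \<noteq> other_color c"
  by (cases c; simp)+

lemma other_color_other_color [simp]: "other_color (other_color c) = c"
  by (cases c) simp_all

lemma color_neq_imp_other: "a \<noteq> c \<Longrightarrow> a = other_color c"
  by (cases a; cases c; simp)

lemma ex_color: "(\<exists>c. P c) \<longleftrightarrow> P Purple \<or> P Blue"
  by (metis color.exhaust)

lemma all_color: "(\<forall>c. P c) \<longleftrightarrow> P Purple \<and> P Blue"
  by (metis color.exhaust)

lemma dom_can_win_Sepy_no_steps:
  assumes "\<not> sepy_wins_now E V col" "dom_can_win E V d s col Dom d"
  shows "dom_can_win E V d s col Sepy 0"
proof (cases "dom_wins_now E V col")
  case True
  then show ?thesis using assms(1) by (rule dom_can_win.terminal_win[rotated])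
next
  case False
  show ?thesis by (rule dom_can_win.sepy_turn[OF assms(1) False assms(2)]) simp
qed

locale graph_without_isolated =
  fixes E :: "'a \<Rightarrow> 'a \<Rightarrow> bool" and V :: "'a set"
  assumes finite_V: "finite V"
    and edge_in_V: "\<And>u v. E u v \<Longrightarrow> u \<in> V \<and> v \<in> V"
    and edge_sym: "\<And>u v. E u v \<Longrightarrow> E v u"
    and edge_irrefl: "\<And>v. \<not> E v v"
    and no_isolated: "\<And>v. v \<in> V \<Longrightarrow> \<exists>u. E v u"
begin

abbreviation nbhd :: "'a \<Rightarrow> 'a set" where "nbhd \<equiv> cnbhd E V"

lemma mem_nbhd: "x \<in> nbhd u \<longleftrightarrow> x \<in> V \<and> (x = u \<or> E u x)"
  by (auto simp: cnbhd_def)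

lemma self_in_nbhd: "u \<in> V \<Longrightarrow> u \<in> nbhd u"
  by (simp add: mem_nbhd)

lemma nbr_in_nbhd: "E u x \<Longrightarrow> x \<in> nbhd u"
  using edge_in_V by (simp add: mem_nbhd)

definition bichromatic :: "'a coloring \<Rightarrow> 'a \<Rightarrow> bool" where
  "bichromatic col u \<longleftrightarrow> (\<forall>c. \<exists>x\<in>nbhd u. col x = Some c)"

definition threatened :: "'a coloring \<Rightarrow> 'a set" where
  "threatened col = {u \<in> V. col u \<noteq> None \<and> \<not> bichromatic col u}"

definition uncolored_nbrs :: "'a coloring \<Rightarrow> 'a \<Rightarrow> 'a set" where
  "uncolored_nbrs col y = {n. E y n \<and> col n = None}"

definition num_uncolored :: "'a coloring \<Rightarrow> nat" where
  "num_uncolored col = card {v \<in> V. col v = None}"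

lemma sepy_wins_now_iff:
  "sepy_wins_now E V col \<longleftrightarrow> (\<exists>u\<in>V. \<exists>c. \<forall>x\<in>nbhd u. col x = Some c)"
  unfolding sepy_wins_now_def colored_def ex_color cnbhd_def by blast

lemma dom_wins_now_iff: "dom_wins_now E V col \<longleftrightarrow> (\<forall>u\<in>V. bichromatic col u)"
  unfolding dom_wins_now_def dominating_def colored_def bichromatic_def all_color cnbhd_def
  by blast

lemma legal_step_iff: "legal_step E V col v c \<longleftrightarrow>
   v \<in> V \<and> col v = None \<and> (\<exists>u\<in>nbhd v. \<forall>x\<in>nbhd u. col x \<noteq> Some c)"
  unfolding legal_step_def colored_def cnbhd_def by blast

lemma legal_stepD: "legal_step E V col v c \<Longrightarrow> v \<in> V \<and> col v = None"
  by (simp add: legal_step_iff)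

lemma bichromatic_intro:
  assumes "a \<in> nbhd u" "b \<in> nbhd u" "col a = Some c" "col b = Some (other_color c)"
  shows "bichromatic col u"
  unfolding bichromatic_def
proof
  fix c0
  show "\<exists>x\<in>nbhd u. col x = Some c0"
    using assms color_neq_imp_other[of c0 c] by (cases "c0 = c") auto
qed

lemma bichromatic_upd:
  assumes "col v = None" "bichromatic col u"
  shows "bichromatic (col(v := Some c)) u"
  using assms unfolding bichromatic_def by (metis fun_upd_other option.distinct(1))

lemma threatened_lacks_other_color:
  assumes "y \<in> threatened col" "col y = Some c"
  shows "\<forall>x\<in>nbhd y. col x \<noteq> Some (other_color c)"
proof -
  from assms(1) have y: "y \<in> V" "\<not> bichromatic col y" by (auto simp: threatened_def)
  then obtain c1 where c1: "\<forall>x\<in>nbhd y. col x \<noteq> Some c1" unfolding bichromatic_def by blast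
  have "c1 \<noteq> c" using c1 self_in_nbhd[OF y(1)] assms(2) by auto
  then show ?thesis using c1 color_neq_imp_other by simp
qed

lemma threatened_upd_subset:
  "col v = None \<Longrightarrow> threatened (col(v := Some c)) \<subseteq> threatened col \<union> {v}"
  unfolding threatened_def by (auto dest: bichromatic_upd[where c = c])

lemma finite_threatened: "finite (threatened col)"
  unfolding threatened_def using finite_V by auto

lemma num_uncolored_upd_less:
  assumes "v \<in> V" "col v = None"
  shows "num_uncolored (col(v := Some c)) < num_uncolored col"
proof -
  have "{x \<in> V. (col(v := Some c)) x = None} = {x \<in> V. col x = None} - {v}" by auto
  moreover have "card ({x \<in> V. col x = None} - {v}) < card {x \<in> V. col x = None}"
    using finite_V assms by (intro card_Diff1_less) auto
  ultimately show ?thesis unfolding num_uncolored_def by simp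
qed

lemma threatened_has_uncolored_nbr:
  assumes "\<not> sepy_wins_now E V col" "y \<in> threatened col"
  obtains n where "n \<in> uncolored_nbrs col y"
proof -
  from assms(2) obtain c where y: "y \<in> V" "col y = Some c"
    by (auto simp: threatened_def)
  have "\<exists>x\<in>nbhd y. col x \<noteq> Some c"
    using assms(1) y(1) unfolding sepy_wins_now_iff by blast
  then obtain x where x: "x \<in> nbhd y" "col x \<noteq> Some c" by blast
  have "col x \<noteq> Some (other_color c)"
    using threatened_lacks_other_color[OF assms(2) y(2)] x(1) by blast
  then have "col x = None"
    using x(2) color_neq_imp_other by (cases "col x") auto
  moreover have "E y x" using x y(2) \<open>col x = None\<close> by (auto simp: mem_nbhd)
  ultimately show ?thesis using that by (simp add: uncolored_nbrs_def)
qed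

lemma legal_step_not_monochromatic:
  assumes "legal_step E V col v c"
  shows "\<exists>x\<in>nbhd v. (col(v := Some c)) x \<noteq> Some c"
proof -
  from assms obtain u where v: "v \<in> V" "col v = None" and u: "u \<in> nbhd v"
    and free: "\<forall>x\<in>nbhd u. col x \<noteq> Some c" unfolding legal_step_iff by blast
  show ?thesis
  proof (cases "u = v")
    case True
    obtain n where "E v n" using no_isolated[OF v(1)] by blast
    then show ?thesis using free True edge_irrefl nbr_in_nbhd by (metis fun_upd_other)
  next
    case False
    then show ?thesis using u free self_in_nbhd[of u] by (auto simp: mem_nbhd)
  qed
qed

lemma winning_step_completes_threat:
  assumes "\<not> sepy_wins_now E V col" "legal_step E V col v c"
    "sepy_wins_now E V (col(v := Some c))"
  obtains u where "u \<in> threatened col" "col u = Some c" "uncolored_nbrs col u = {v}"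
proof -
  have v: "v \<in> V" "col v = None" using legal_stepD[OF assms(2)] by auto
  from assms(3) obtain u c0 where u: "u \<in> V"
    and mono: "\<forall>x\<in>nbhd u. (col(v := Some c)) x = Some c0"
    unfolding sepy_wins_now_iff by blast
  have "v \<in> nbhd u"
  proof (rule ccontr)
    assume "v \<notin> nbhd u"
    then have "\<forall>x\<in>nbhd u. col x = Some c0" using mono by (metis fun_upd_other)
    then show False using assms(1) u unfolding sepy_wins_now_iff by blast
  qed
  then have c0: "c0 = c" using mono by fastforce
  have uv: "u \<noteq> v"
    using legal_step_not_monochromatic[OF assms(2)] mono c0 by blast
  have cu: "col u = Some c" using mono uv c0 self_in_nbhd[OF u] by auto
  have "uncolored_nbrs col u = {v}"
  proof
    show "uncolored_nbrs col u \<subseteq> {v}"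
    proof
      fix n assume "n \<in> uncolored_nbrs col u"
      then have "n \<in> nbhd u" "col n = None" by (auto simp: uncolored_nbrs_def nbr_in_nbhd)
      then show "n \<in> {v}" using mono by (cases "n = v") auto
    qed
    show "{v} \<subseteq> uncolored_nbrs col u"
      using \<open>v \<in> nbhd u\<close> uv v by (auto simp: uncolored_nbrs_def mem_nbhd)
  qed
  moreover have "\<not> bichromatic col u"
  proof
    assume "bichromatic col u"
    then have "bichromatic (col(v := Some c)) u" by (rule bichromatic_upd[of col v, OF v(2)])
    then show False using mono c0 unfolding bichromatic_def by (metis option.inject other_color_neq(1))
  qed
  ultimately show ?thesis using that u cu by (simp add: threatened_def)
qed

lemma step_without_threats:
  assumes "threatened col = {}" "\<not> sepy_wins_now E V col" "legal_step E V col v c"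
  shows "\<not> sepy_wins_now E V (col(v := Some c))"
    and "threatened (col(v := Some c)) \<subseteq> {v}"
proof -
  show "\<not> sepy_wins_now E V (col(v := Some c))"
    using winning_step_completes_threat[OF assms(2,3)] assms(1) by blast
  show "threatened (col(v := Some c)) \<subseteq> {v}"
    using threatened_upd_subset[of col v c] legal_stepD[OF assms(3)] assms(1) by simp
qed

lemma legal_step_exists:
  assumes "\<not> dom_wins_now E V col" "threatened col = {}"
  obtains v c where "legal_step E V col v c"
proof -
  obtain u where u: "u \<in> V" "\<not> bichromatic col u" using assms(1) unfolding dom_wins_now_iff by blast
  then obtain c where "\<forall>x\<in>nbhd u. col x \<noteq> Some c" unfolding bichromatic_def by blast
  moreover have "col u = None" using assms(2) u by (auto simp: threatened_def)
  ultimately have "legal_step E V col u c" using u self_in_nbhd unfolding legal_step_iff by blast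
  then show ?thesis by (rule that)
qed

definition sepy_turn_inv :: "'a coloring \<Rightarrow> bool" where
  "sepy_turn_inv col \<longleftrightarrow> \<not> sepy_wins_now E V col \<and> card (threatened col) \<le> 1 \<and>
     (\<forall>y\<in>threatened col. \<forall>c z. col y = Some c \<and> uncolored_nbrs col y = {z}
        \<longrightarrow> \<not> legal_step E V col z c)"

definition dom_turn_inv :: "'a coloring \<Rightarrow> nat \<Rightarrow> bool" where
  "dom_turn_inv col j \<longleftrightarrow> \<not> sepy_wins_now E V col \<and> 1 \<le> j \<and>
     card (threatened col) \<le> j \<and> card (threatened col) \<le> 2 \<and>
     \<not> (\<exists>y w n. y \<in> threatened col \<and> w \<in> threatened col \<and> col y \<noteq> col w \<and>
          uncolored_nbrs col y = {n} \<and> uncolored_nbrs col w = {n})"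

lemma card_threatened_le_1_eq:
  "card (threatened col) \<le> 1 \<Longrightarrow> y \<in> threatened col \<Longrightarrow> w \<in> threatened col \<Longrightarrow> y = w"
  using card_le_Suc0_iff_eq[OF finite_threatened] by auto

lemma dom_turn_inv_intro:
  "\<not> sepy_wins_now E V col \<Longrightarrow> 1 \<le> j \<Longrightarrow> card (threatened col) \<le> 1 \<Longrightarrow> dom_turn_inv col j"
  unfolding dom_turn_inv_def using card_threatened_le_1_eq by fastforce

lemma sepy_turn_inv_imp_dom_turn_inv: "sepy_turn_inv col \<Longrightarrow> 1 \<le> j \<Longrightarrow> dom_turn_inv col j"
  by (simp add: sepy_turn_inv_def dom_turn_inv_intro)

lemma sepy_turn_inv_if_unthreatened:
  "\<not> sepy_wins_now E V col \<Longrightarrow> threatened col = {} \<Longrightarrow> sepy_turn_inv col"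
  by (simp add: sepy_turn_inv_def)

lemma card_threatened_le_1: "threatened col \<subseteq> {v} \<Longrightarrow> card (threatened col) \<le> 1"
  using card_mono[of "{v}"] by fastforce

lemma defuse_step:
  assumes y: "y \<in> threatened col" "col y = Some c" and n: "n \<in> uncolored_nbrs col y"
  shows "legal_step E V col n (other_color c)"
    and "threatened (col(n := Some (other_color c))) \<subseteq> threatened col - {y}"
proof -
  have yV: "y \<in> V" using y(1) by (simp add: threatened_def)
  have En: "E y n" and cn: "col n = None" using n by (auto simp: uncolored_nbrs_def)
  have "y \<in> nbhd n" using edge_sym[OF En] yV by (simp add: mem_nbhd)
  then show "legal_step E V col n (other_color c)"
    using edge_in_V[OF En] cn threatened_lacks_other_color[OF y] unfolding legal_step_iff by blast
  let ?col' = "col(n := Some (other_color c))"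
  have nV: "n \<in> V" using edge_in_V[OF En] by simp
  have colors: "?col' y = Some c" "?col' n = Some (other_color c)" using y(2) cn by auto
  have "bichromatic ?col' y"
    by (rule bichromatic_intro[OF self_in_nbhd[OF yV] nbr_in_nbhd[OF En] colors])
  moreover have "bichromatic ?col' n"
    by (rule bichromatic_intro[OF nbr_in_nbhd[OF edge_sym[OF En]] self_in_nbhd[OF nV] colors])
  ultimately show "threatened ?col' \<subseteq> threatened col - {y}"
    using threatened_upd_subset[of col n "other_color c", OF cn] by (auto simp: threatened_def)
qed

text \<open>
  The neighbour \<open>n\<close> is chosen so that colouring it does not complete a threatened vertex of
  the other colour; this is possible because there are at most two threatened vertices.
\<close>

lemma repair_target_exists:
  assumes D: "dom_turn_inv col j" and y: "y \<in> threatened col"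
  obtains n where "n \<in> uncolored_nbrs col y"
    "\<forall>w\<in>threatened col. col w \<noteq> col y \<longrightarrow> uncolored_nbrs col w \<noteq> {n}"
proof -
  have ns: "\<not> sepy_wins_now E V col" and le2: "card (threatened col) \<le> 2"
    and no_shared: "\<not> (\<exists>y w n. y \<in> threatened col \<and> w \<in> threatened col \<and> col y \<noteq> col w \<and>
          uncolored_nbrs col y = {n} \<and> uncolored_nbrs col w = {n})"
    using D by (auto simp: dom_turn_inv_def)
  obtain n0 where n0: "n0 \<in> uncolored_nbrs col y"
    using threatened_has_uncolored_nbr[OF ns y] by blast
  show ?thesis
  proof (cases "\<forall>w\<in>threatened col. col w \<noteq> col y \<longrightarrow> uncolored_nbrs col w \<noteq> {n0}")
    case True
    then show ?thesis using that n0 by blast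
  next
    case False
    then obtain w where w: "w \<in> threatened col" "col w \<noteq> col y" "uncolored_nbrs col w = {n0}"
      by blast
    have only_w: "w' = w" if "w' \<in> threatened col" "col w' \<noteq> col y" for w'
    proof (rule ccontr)
      assume "w' \<noteq> w"
      moreover have "w' \<noteq> y" "w \<noteq> y" using that w(2) by auto
      ultimately have "card {y, w, w'} = 3" by auto
      moreover have "card {y, w, w'} \<le> card (threatened col)"
        using y w(1) that(1) by (intro card_mono[OF finite_threatened]) auto
      ultimately show False using le2 by simp
    qed
    have "uncolored_nbrs col y \<noteq> {n0}" using no_shared y w by blast
    then obtain n1 where "n1 \<in> uncolored_nbrs col y" "n1 \<noteq> n0" using n0 by blast
    then show ?thesis using that only_w w(3) by blast
  qed
qed

lemma repair_step:
  assumes D: "dom_turn_inv col j" and y: "y \<in> threatened col"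
  obtains n c where "legal_step E V col n c" "\<not> sepy_wins_now E V (col(n := Some c))"
    "threatened (col(n := Some c)) \<subseteq> threatened col - {y}"
proof -
  obtain cy where cy: "col y = Some cy" using y by (auto simp: threatened_def)
  obtain n where n: "n \<in> uncolored_nbrs col y"
    and avoid: "\<forall>w\<in>threatened col. col w \<noteq> col y \<longrightarrow> uncolored_nbrs col w \<noteq> {n}"
    using repair_target_exists[OF D y] by blast
  note L = defuse_step(1)[OF y cy n] and sub = defuse_step(2)[OF y cy n]
  have "\<not> sepy_wins_now E V (col(n := Some (other_color cy)))"
  proof
    assume "sepy_wins_now E V (col(n := Some (other_color cy)))"
    moreover have "\<not> sepy_wins_now E V col" using D by (simp add: dom_turn_inv_def)
    ultimately obtain u where "u \<in> threatened col" "col u = Some (other_color cy)"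
      "uncolored_nbrs col u = {n}"
      using winning_step_completes_threat[OF _ L] by blast
    then show False using avoid cy by auto
  qed
  then show ?thesis using that L sub by blast
qed

lemma recolor_step:
  assumes U: "threatened col = {}" and ns: "\<not> sepy_wins_now E V col"
    and L: "legal_step E V col v c" and vT: "v \<in> threatened (col(v := Some c))"
    and x: "E v x" "col x \<noteq> None"
  shows "legal_step E V col v (other_color c)"
    and "sepy_turn_inv (col(v := Some (other_color c)))"
proof -
  have v: "v \<in> V" "col v = None" using legal_stepD[OF L] by auto
  have lacks: "\<forall>y\<in>nbhd v. (col(v := Some c)) y \<noteq> Some (other_color c)"
    using threatened_lacks_other_color[OF vT] by simp
  have "\<forall>y\<in>nbhd v. col y \<noteq> Some (other_color c)"
    using lacks v(2) by (metis fun_upd_apply option.distinct(1))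
  then show L2: "legal_step E V col v (other_color c)"
    using v self_in_nbhd unfolding legal_step_iff by blast
  let ?col2 = "col(v := Some (other_color c))"
  have xv: "x \<noteq> v" using x(1) edge_irrefl by auto
  obtain a where a: "col x = Some a" using x(2) by blast
  have "a \<noteq> other_color c" using lacks nbr_in_nbhd[OF x(1)] a xv by auto
  then have "col x = Some c" using a color_neq_imp_other by fastforce
  then have "bichromatic ?col2 v"
    using bichromatic_intro[OF nbr_in_nbhd[OF x(1)] self_in_nbhd[OF v(1)]] xv by simp
  then have "threatened ?col2 = {}"
    using step_without_threats(2)[OF U ns L2] by (auto simp: threatened_def)
  then show "sepy_turn_inv ?col2"
    using sepy_turn_inv_if_unthreatened step_without_threats(1)[OF U ns L2] by blast
qed

lemma partner_step:
  assumes U: "threatened col = {}" and ns: "\<not> sepy_wins_now E V col"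
    and v: "v \<in> V" "col v = None" and z: "E v z" "\<forall>x. E v x \<longrightarrow> x = z"
    and z_uncolored: "col z = None"
  shows "legal_step E V col z c" and "sepy_turn_inv (col(z := Some c))"
proof -
  have zV: "z \<in> V" using edge_in_V[OF z(1)] by simp
  have nbhd_v: "nbhd v = {v, z}" unfolding set_eq_iff mem_nbhd using v(1) zV z by blast
  have "v \<in> nbhd z" using edge_sym[OF z(1)] v(1) by (simp add: mem_nbhd)
  moreover have "\<forall>x\<in>nbhd v. col x \<noteq> Some c" using nbhd_v v(2) z_uncolored by simp
  ultimately show L: "legal_step E V col z c"
    using zV z_uncolored unfolding legal_step_iff by blast
  let ?col3 = "col(z := Some c)"
  have sub: "threatened ?col3 \<subseteq> {z}" by (rule step_without_threats(2)[OF U ns L])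
  have zv: "z \<noteq> v" using z(1) edge_irrefl by auto
  have "\<not> legal_step E V ?col3 v c"
  proof
    assume "legal_step E V ?col3 v c"
    then obtain u where u: "u \<in> {v, z}" and free: "\<forall>x\<in>nbhd u. ?col3 x \<noteq> Some c"
      unfolding legal_step_iff nbhd_v by blast
    have "z \<in> nbhd u" using u nbhd_v self_in_nbhd[OF zV] by blast
    with free show False by fastforce
  qed
  moreover have "v \<in> uncolored_nbrs ?col3 z"
    using edge_sym[OF z(1)] zv v(2) by (simp add: uncolored_nbrs_def)
  ultimately have "\<not> legal_step E V ?col3 z' c'"
    if "y \<in> threatened ?col3" "?col3 y = Some c'" "uncolored_nbrs ?col3 y = {z'}" for y c' z'
    using that sub by auto
  then show "sepy_turn_inv ?col3"
    unfolding sepy_turn_inv_def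
    using step_without_threats(1)[OF U ns L] card_threatened_le_1[OF sub] by blast
qed

text \<open>
  If colouring \<open>v\<close> with \<open>c\<close> would leave \<open>v\<close> completable by Sepy, Dom instead colours \<open>v\<close> with
  the other colour (when \<open>v\<close> already has a coloured neighbour) or colours the unique neighbour
  of \<open>v\<close> (when all neighbours are uncoloured).
\<close>

lemma final_step:
  assumes U: "threatened col = {}" and ns: "\<not> sepy_wins_now E V col"
    and L: "legal_step E V col v c"
  obtains v' c' where "legal_step E V col v' c'" "sepy_turn_inv (col(v' := Some c'))"
proof -
  let ?col' = "col(v := Some c)"
  have v: "v \<in> V" "col v = None" using legal_stepD[OF L] by auto
  note ns' = step_without_threats(1)[OF U ns L] and sub = step_without_threats(2)[OF U ns L]
  consider (harmless) "\<not> (v \<in> threatened ?col' \<and> (\<exists>z. uncolored_nbrs ?col' v = {z}))"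
    | (colored_nbr) x where "v \<in> threatened ?col'" "E v x" "col x \<noteq> None"
    | (lonely) z where "E v z" "\<forall>x. E v x \<longrightarrow> x = z" "col z = None"
  proof (cases "\<exists>x. E v x \<and> col x \<noteq> None")
    case False
    then have "uncolored_nbrs ?col' v = {x. E v x}"
      using edge_irrefl by (fastforce simp: uncolored_nbrs_def)
    show ?thesis
    proof (cases "\<exists>z. uncolored_nbrs ?col' v = {z}")
      case True
      then obtain z where "{x. E v x} = {z}" using \<open>uncolored_nbrs ?col' v = _\<close> by auto
      then have "E v z" "\<forall>x. E v x \<longrightarrow> x = z" by auto
      then show ?thesis using that(3) False by blast
    next
      case False
      then show ?thesis using that(1) by blast
    qed
  qed blast+
  then show ?thesis
  proof cases
    case harmless
    have "sepy_turn_inv ?col'"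
      unfolding sepy_turn_inv_def using ns' sub harmless card_threatened_le_1[OF sub] by auto
    then show ?thesis using that L by blast
  next
    case colored_nbr
    then show ?thesis using that recolor_step[OF U ns L] by blast
  next
    case lonely
    then show ?thesis using that partner_step[OF U ns v] by blast
  qed
qed

text \<open>
  Two differently coloured threatened vertices after Sepy's step cannot share their last
  uncoloured neighbour \<open>n\<close>: they are not adjacent, so the old threatened vertex \<open>a\<close> already had
  \<open>n\<close> as its last uncoloured neighbour, and the new one \<open>v\<close> now makes colouring \<open>n\<close> with the
  colour of \<open>a\<close> legal, which the invariant had excluded.
\<close>

lemma sepy_step_no_shared_last_nbr:
  assumes S: "sepy_turn_inv col" and L: "legal_step E V col v c"
    and a: "a \<in> threatened col" "a \<in> threatened (col(v := Some c))" "col a \<noteq> Some c"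
    and vT: "v \<in> threatened (col(v := Some c))"
    and nv: "uncolored_nbrs (col(v := Some c)) v = {n}"
  shows "uncolored_nbrs (col(v := Some c)) a \<noteq> {n}"
proof
  assume na: "uncolored_nbrs (col(v := Some c)) a = {n}"
  let ?col' = "col(v := Some c)"
  have v: "v \<in> V" "col v = None" using legal_stepD[OF L] by auto
  obtain ca where aV: "a \<in> V" and ca: "col a = Some ca" using a(1) by (auto simp: threatened_def)
  have av: "a \<noteq> v" using ca v(2) by auto
  have cc: "c = other_color ca" using a(3) ca color_neq_imp_other by auto
  have "\<not> E a v"
  proof
    assume "E a v"
    then have "bichromatic ?col' a"
      using bichromatic_intro[OF self_in_nbhd[OF aV] nbr_in_nbhd] ca av cc by simp
    then show False using a(2) by (simp add: threatened_def)
  qed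
  then have "uncolored_nbrs col a = {n}"
    using na av by (auto simp: uncolored_nbrs_def split: if_splits)
  then have not_legal: "\<not> legal_step E V col n ca"
    using S a(1) ca by (auto simp: sepy_turn_inv_def)
  have "n \<in> uncolored_nbrs ?col' v" using nv by simp
  then have Evn: "E v n" and cn: "col n = None" by (auto simp: uncolored_nbrs_def split: if_splits)
  have lacks: "\<forall>x\<in>nbhd v. ?col' x \<noteq> Some (other_color c)"
    using threatened_lacks_other_color[OF vT] by simp
  have "\<forall>x\<in>nbhd v. col x \<noteq> Some ca"
    using lacks v(2) cc by (metis fun_upd_apply option.distinct(1) other_color_other_color)
  moreover have "v \<in> nbhd n" using edge_sym[OF Evn] v(1) by (simp add: mem_nbhd)
  ultimately have "legal_step E V col n ca"
    using edge_in_V[OF Evn] cn unfolding legal_step_iff by blast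
  then show False using not_legal by contradiction
qed

lemma sepy_turn_step:
  assumes S: "sepy_turn_inv col" and L: "legal_step E V col v c" and d: "2 \<le> d"
  shows "dom_turn_inv (col(v := Some c)) d"
proof -
  let ?col' = "col(v := Some c)"
  have v: "v \<in> V" "col v = None" using legal_stepD[OF L] by auto
  have ns: "\<not> sepy_wins_now E V col" and le1: "card (threatened col) \<le> 1"
    using S by (auto simp: sepy_turn_inv_def)
  have ns': "\<not> sepy_wins_now E V ?col'"
  proof
    assume "sepy_wins_now E V ?col'"
    then obtain u where "u \<in> threatened col" "col u = Some c" "uncolored_nbrs col u = {v}"
      using winning_step_completes_threat[OF ns L] by blast
    then show False using S L by (auto simp: sepy_turn_inv_def)
  qed
  have sub: "threatened ?col' \<subseteq> threatened col \<union> {v}" by (rule threatened_upd_subset[of col v c, OF v(2)])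
  have "card (threatened ?col') \<le> card (threatened col \<union> {v})"
    using card_mono[OF _ sub] finite_threatened by simp
  also have "\<dots> \<le> 2" using card_Un_le[of "threatened col" "{v}"] le1 by simp
  finally have le2: "card (threatened ?col') \<le> 2" .
  have "uncolored_nbrs ?col' y \<noteq> {n} \<or> uncolored_nbrs ?col' w \<noteq> {n}"
    if y: "y \<in> threatened ?col'" and w: "w \<in> threatened ?col'" and yw: "?col' y \<noteq> ?col' w"
    for y w n
  proof -
    have "y \<noteq> w" using yw by auto
    then have "y = v \<or> w = v" using y w sub card_threatened_le_1_eq[OF le1] by blast
    then show ?thesis
    proof
      assume yv: "y = v"
      then have "w \<in> threatened col" "col w \<noteq> Some c" using w sub yw \<open>y \<noteq> w\<close> by auto
      then show ?thesis using sepy_step_no_shared_last_nbr[OF S L _ w _ y[unfolded yv]] yv by blast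
    next
      assume wv: "w = v"
      then have "y \<in> threatened col" "col y \<noteq> Some c" using y sub yw \<open>y \<noteq> w\<close> by auto
      then show ?thesis using sepy_step_no_shared_last_nbr[OF S L _ y _ w[unfolded wv]] wv by blast
    qed
  qed
  moreover have "1 \<le> d" "card (threatened ?col') \<le> d" using le2 d by simp_all
  ultimately show ?thesis unfolding dom_turn_inv_def using ns' le2 by blast
qed

lemma dom_turn_step:
  assumes D: "dom_turn_inv col j" and nd: "\<not> dom_wins_now E V col"
  obtains v c where "legal_step E V col v c"
    "if j = 1 then sepy_turn_inv (col(v := Some c)) else dom_turn_inv (col(v := Some c)) (j - 1)"
proof -
  have ns: "\<not> sepy_wins_now E V col" and j: "1 \<le> j" "card (threatened col) \<le> j"
    and le2: "card (threatened col) \<le> 2" using D by (auto simp: dom_turn_inv_def)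
  show ?thesis
  proof (cases "threatened col = {}")
    case False
    then obtain y where y: "y \<in> threatened col" by blast
    obtain v c where L: "legal_step E V col v c" and ns': "\<not> sepy_wins_now E V (col(v := Some c))"
      and sub: "threatened (col(v := Some c)) \<subseteq> threatened col - {y}"
      using repair_step[OF D y] by blast
    have "card (threatened (col(v := Some c))) \<le> card (threatened col - {y})"
      using card_mono[OF _ sub] finite_threatened by simp
    also have "\<dots> = card (threatened col) - 1" using y finite_threatened by simp
    finally have le: "card (threatened (col(v := Some c))) \<le> card (threatened col) - 1" .
    show ?thesis
    proof (cases "j = 1")
      case True
      then have "threatened (col(v := Some c)) = {}" using le j finite_threatened by simp
      then show ?thesis using that L ns' True sepy_turn_inv_if_unthreatened by simp
    next
      case False
      then show ?thesis using that L ns' le le2 j dom_turn_inv_intro by simp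
    qed
  next
    case True
    obtain v c where L: "legal_step E V col v c" using legal_step_exists[OF nd True] by blast
    show ?thesis
    proof (cases "j = 1")
      case j1: True
      then show ?thesis using that final_step[OF True ns L] by auto
    next
      case False
      then show ?thesis using that L j step_without_threats[OF True ns L]
          card_threatened_le_1 dom_turn_inv_intro by simp
    qed
  qed
qed

lemma dom_can_win_from_invariants:
  assumes d: "2 \<le> d"
  shows "(dom_turn_inv col j \<longrightarrow> dom_can_win E V d 1 col Dom j)
     \<and> (sepy_turn_inv col \<longrightarrow> dom_can_win E V d 1 col Sepy 1)"
proof (induction "num_uncolored col" arbitrary: col j rule: less_induct)
  case less
  have after_step: "num_uncolored (col(v := Some c)) < num_uncolored col"
    if "legal_step E V col v c" for v c
    using legal_stepD[OF that] by (auto intro: num_uncolored_upd_less)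
  have dom: "dom_can_win E V d 1 col Dom j" if D: "dom_turn_inv col j" for j
  proof (cases "dom_wins_now E V col")
    case True
    then show ?thesis using D by (auto simp: dom_turn_inv_def intro: dom_can_win.terminal_win)
  next
    case nd: False
    obtain v c where L: "legal_step E V col v c" and next_inv:
      "if j = 1 then sepy_turn_inv (col(v := Some c)) else dom_turn_inv (col(v := Some c)) (j - 1)"
      using dom_turn_step[OF D nd] by blast
    have "dom_can_win E V d 1 (col(v := Some c)) (if j = 1 then Sepy else Dom) (if j = 1 then 1 else j - 1)"
      using less[OF after_step[OF L]] next_inv by (cases "j = 1") auto
    moreover have "\<not> sepy_wins_now E V col" "0 < j" using D by (auto simp: dom_turn_inv_def)
    ultimately show ?thesis using dom_can_win.dom_step[OF _ nd _ L] by blast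
  qed
  have sepy: "dom_can_win E V d 1 col Sepy 1" if S: "sepy_turn_inv col"
  proof (cases "dom_wins_now E V col")
    case True
    then show ?thesis using S by (auto simp: sepy_turn_inv_def intro: dom_can_win.terminal_win)
  next
    case nd: False
    have ns: "\<not> sepy_wins_now E V col" using S by (simp add: sepy_turn_inv_def)
    have "dom_can_win E V d 1 (col(v := Some c)) Sepy 0" if L: "legal_step E V col v c" for v c
    proof -
      have D': "dom_turn_inv (col(v := Some c)) d" by (rule sepy_turn_step[OF S L d])
      then have "dom_can_win E V d 1 (col(v := Some c)) Dom d" using less[OF after_step[OF L]] by blast
      moreover have "\<not> sepy_wins_now E V (col(v := Some c))" using D' by (simp add: dom_turn_inv_def)
      ultimately show ?thesis by (rule dom_can_win_Sepy_no_steps[rotated])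
    qed
    moreover have "dom_can_win E V d 1 col Dom d"
      using dom sepy_turn_inv_imp_dom_turn_inv[OF S] d by simp
    ultimately show ?thesis using ns nd by (auto intro: dom_can_win.sepy_turn)
  qed
  show ?case using dom sepy by blast
qed

lemma initial_invariants:
  assumes "1 \<le> d"
  shows "sepy_turn_inv (\<lambda>_. None)" and "dom_turn_inv (\<lambda>_. None) d"
proof -
  have "threatened (\<lambda>_. None) = {}" by (simp add: threatened_def)
  moreover have "\<not> sepy_wins_now E V (\<lambda>_. None)"
    unfolding sepy_wins_now_iff using self_in_nbhd by fastforce
  ultimately show "sepy_turn_inv (\<lambda>_. None)" "dom_turn_inv (\<lambda>_. None) d"
    using assms sepy_turn_inv_if_unthreatened dom_turn_inv_intro by simp_all
qed

end

theorem theorem10: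
  fixes E :: "'a \<Rightarrow> 'a \<Rightarrow> bool" and V :: "'a set" and d :: nat
  assumes "finite V"
    and "\<And>u v. E u v \<Longrightarrow> u \<in> V \<and> v \<in> V"
    and "\<And>u v. E u v \<Longrightarrow> E v u"
    and "\<And>v. \<not> E v v"
    and "\<And>v. v \<in> V \<Longrightarrow> \<exists>u. E v u"
    and "d \<ge> 2"
  shows "dom_can_win E V d 1 (\<lambda>_. None) Dom d \<and> dom_can_win E V d 1 (\<lambda>_. None) Sepy 1"
proof -
  interpret graph_without_isolated E V using assms(1-5) by unfold_locales auto
  show ?thesis
    using dom_can_win_from_invariants[OF assms(6)] initial_invariants[of d] assms(6) by simp
qed

end
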